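(* Let $(G,\mathbf p)$ be a framework (with $\mathbf p$ pinned with $\ell$-dimensional affine span) with $\dim(K)=1$, let $E$ be a stiff-bar energy at $\mathbf p$, and let $f(\delta\mathbf p)=E(\mathbf p+\delta\mathbf p)-E(\mathbf p)$ on $\ell$-pinned configuration space. Let $k\ge2$ be an integer and suppose that $(G,\mathbf p)$ has a $(1,k-1)$-flex $$\mathbf p(t)=\mathbf p+\mathbf p't+\mathbf p''t^2+\cdots+\mathbf p^{(k-1)}t^{k-1}$$ with $|\mathbf p'|=1$ and $\mathbf p^{(j)}\in\overline K$ for $2\le j\le k-1$. Then the family $$\delta\mathbf p(t;y_0,\mathbf p_0^{(k)})=y_0\mathbf p't+y_0^2\mathbf p''t^2+\cdots+y_0^{k-1}\mathbf p^{(k-1)}t^{k-1}+\mathbf p_0^{(k)}t^k,$$ parameterized by $(y_0,\mathbf p_0^{(k)})$ in the unit sphere of $\mathbb R\times\overline K$, is indicative at order $2k$ for $f$ (at the origin).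
   Context: Fix a dimension $d$. A configuration is $\mathbf p=(\mathbf p_1,\dots,\mathbf p_n)$, $\mathbf p_i\in\mathbb R^d$; a framework $(G,\mathbf p)$ consists of a graph $G$ on $\{1,\dots,n\}$ and a configuration. A configuration $\mathbf q$ is in $\ell$-pinned position if $\mathbf q_1=0$ and, for $2\le i\le\ell+1$, $\mathbf q_i\in\mathrm{span}(e_1,\dots,e_{i-1})$; these form the $\ell$-pinned configuration space. $\mathbf p$ is pinned if it has $\ell$-dimensional affine span, $\mathbf p_1,\dots,\mathbf p_{\ell+1}$ are affinely independent, and $\mathbf p$ is in $\ell$-pinned position. All trajectories are $\ell$-pinned. A $C^k$ function $\varphi(t)$ is $k$-vanishing if $\varphi^{(i)}(0)=0$ for $1\le i\le k$, $k$-active if $(k-1)$-vanishing but not $k$-vanishing. With $\mathbf m(\mathbf q)=(|\mathbf q_i-\mathbf q_j|^2)_{ij\in E(G)}$, a $(j,k)$-flex is an analytic non-constant $\ell$-pinned trajectory $\mathbf p(t)$, $\mathbf p(0)=\mathbf p$, that is $j$-active with $\mathbf m(\mathbf p(t))$ $k$-vanishing. $K$ is the linear space of $\ell$-pinned $\mathbf p'$ with $(\mathbf p_v-\mathbf p_w)\cdot(\mathbf p'_v-\mathbf p'_w)=0$ for all edges $vw$, $\overline K$ a fixed complementary subspace. A stiff-bar energy at $\mathbf p$ is $E(\mathbf q)=\sum_{ij\in E(G)}E_{ij}(|\mathbf q_i-\mathbf q_j|)$, each $E_{ij}$ analytic at $d_{ij}=|\mathbf p_i-\mathbf p_j|\ne0$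 with a strict local minimum there and $E_{ij}''(d_{ij})>0$. A family of test trajectories $\{\mathbf z(t;\mathbf z_0)\}_{\mathbf z_0\in S}$ consists of maps defined for $t$ in a common interval $[0,\varepsilon]$, each $t\mapsto\mathbf z(t;\mathbf z_0)$ analytic, non-constant, with $\mathbf z(0;\mathbf z_0)=0$. For a $C^{2k+1}$ function $f$ with a critical point at $0$ and $f(0)=0$, it is indicative at order $2k$ for $f$ if: (I1) $S$ is compact; (I2) $(t,\mathbf z_0)\mapsto\mathbf z(t;\mathbf z_0)$ is $C^{2k+1}$; (I3) for every $0<\delta\le\varepsilon$ there is a neighborhood $U$ of the origin such that every point of $U$ equals $\mathbf z(t;\mathbf z_0)$ for some $\mathbf z_0\in S$, $t\in[0,\delta]$; (I4) for every $\mathbf z_0\in S$ all Taylor coefficients in $t$ of $f(\mathbf z(t;\mathbf z_0))$ of order less than $2k$ vanish. *)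

theory Defs
  imports "HOL-Analysis.Analysis"
begin

text \<open>Configurations: vertices indexed by the finite type 'n, points in real^'d.
  The numbering of vertices 1..n and of coordinate axes e_1..e_d is given by
  bijections vert and ax.\<close>

definition pinned_pos :: "(nat \<Rightarrow> 'n) \<Rightarrow> (nat \<Rightarrow> 'd::finite) \<Rightarrow> nat \<Rightarrow> real^'d^'n \<Rightarrow> bool" where
  "pinned_pos vert ax l q \<longleftrightarrow>
     q $ vert 1 = 0 \<and>
     (\<forall>i\<in>{2..l+1}. q $ vert i \<in> span ((\<lambda>j. axis (ax j) (1::real)) ` {1..i-1}))"

definition pinned_space :: "(nat \<Rightarrow> 'n) \<Rightarrow> (nat \<Rightarrow> 'd::finite) \<Rightarrow> nat \<Rightarrow> (real^'d^'n) set" where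
  "pinned_space vert ax l = {q. pinned_pos vert ax l q}"

definition is_pinned :: "(nat \<Rightarrow> 'n) \<Rightarrow> (nat \<Rightarrow> 'd::finite) \<Rightarrow> nat \<Rightarrow> real^'d^'n \<Rightarrow> bool" where
  "is_pinned vert ax l p \<longleftrightarrow>
     aff_dim (range (\<lambda>v. p $ v)) = int l \<and>
     inj_on (\<lambda>i. p $ vert i) {1..l+1} \<and>
     \<not> affine_dependent ((\<lambda>i. p $ vert i) ` {1..l+1}) \<and>
     pinned_pos vert ax l p"

text \<open>A simple graph, given by an orientation of its edges (each edge listed once).\<close>
definition simple_graph_edges :: "('n \<times> 'n) set \<Rightarrow> bool" where
  "simple_graph_edges Edges \<longleftrightarrow> (\<forall>(i,j)\<in>Edges. i \<noteq> j \<and> (j,i) \<notin> Edges)"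

definition meas :: "real^'d^'n \<Rightarrow> 'n \<times> 'n \<Rightarrow> real" where
  "meas q e = (norm (q $ fst e - q $ snd e))^2"

definition vderiv :: "(real \<Rightarrow> 'a::real_normed_vector) \<Rightarrow> real \<Rightarrow> 'a" where
  "vderiv g = (\<lambda>x. vector_derivative g (at x))"

definition k_vanishing :: "nat \<Rightarrow> (real \<Rightarrow> 'a::real_normed_vector) \<Rightarrow> bool" where
  "k_vanishing k \<phi> \<longleftrightarrow> (\<forall>i\<in>{1..k}. (vderiv ^^ i) \<phi> 0 = 0)"

definition k_active :: "nat \<Rightarrow> (real \<Rightarrow> 'a::real_normed_vector) \<Rightarrow> bool" where
  "k_active k \<phi> \<longleftrightarrow> k_vanishing (k - 1) \<phi> \<and> \<not> k_vanishing k \<phi>"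

definition real_analytic_on :: "real set \<Rightarrow> (real \<Rightarrow> 'a::real_normed_vector) \<Rightarrow> bool" where
  "real_analytic_on S g \<longleftrightarrow>
     (\<forall>x\<in>S. \<exists>r>0. \<exists>a::nat \<Rightarrow> 'a. \<forall>y\<in>ball x r. (\<lambda>n. ((y - x)^n) *\<^sub>R a n) sums g y)"

definition is_flex :: "(nat \<Rightarrow> 'n) \<Rightarrow> (nat \<Rightarrow> 'd::finite) \<Rightarrow> nat \<Rightarrow> ('n \<times> 'n) set
      \<Rightarrow> real^'d^'n \<Rightarrow> (real \<Rightarrow> real^'d^'n) \<Rightarrow> nat \<Rightarrow> nat \<Rightarrow> bool" where
  "is_flex vert ax l Edges p q j k \<longleftrightarrow>
     (\<exists>\<epsilon>>0. real_analytic_on (ball 0 \<epsilon>) q \<and> (\<exists>t\<in>ball 0 \<epsilon>. q t \<noteq> q 0) \<and>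
            (\<forall>t\<in>ball 0 \<epsilon>. pinned_pos vert ax l (q t))) \<and>
     q 0 = p \<and> k_active j q \<and> (\<forall>e\<in>Edges. k_vanishing k (\<lambda>t. meas (q t) e))"

definition Kspace :: "(nat \<Rightarrow> 'n) \<Rightarrow> (nat \<Rightarrow> 'd::finite) \<Rightarrow> nat \<Rightarrow> ('n \<times> 'n) set
      \<Rightarrow> real^'d^'n \<Rightarrow> (real^'d^'n) set" where
  "Kspace vert ax l Edges p =
     {q \<in> pinned_space vert ax l. \<forall>e\<in>Edges. (p $ fst e - p $ snd e) \<bullet> (q $ fst e - q $ snd e) = 0}"

definition is_complement :: "'a::real_vector set \<Rightarrow> 'a set \<Rightarrow> 'a set \<Rightarrow> bool" where
  "is_complement V K Kbar \<longleftrightarrow> subspace Kbar \<and> Kbar \<subseteq> V \<and> K \<inter> Kbar = {0} \<and>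
     V \<subseteq> {a + b | a b. a \<in> K \<and> b \<in> Kbar}"

definition stiff_bar_energy :: "('n \<times> 'n) set \<Rightarrow> real^'d^'n \<Rightarrow> ('n \<times> 'n \<Rightarrow> real \<Rightarrow> real) \<Rightarrow> bool" where
  "stiff_bar_energy Edges p Ee \<longleftrightarrow>
     (\<forall>e\<in>Edges. let d = norm (p $ fst e - p $ snd e) in
        d \<noteq> 0 \<and> real_analytic_on {d} (Ee e) \<and>
        (\<exists>r>0. \<forall>x. 0 < \<bar>x - d\<bar> \<and> \<bar>x - d\<bar> < r \<longrightarrow> Ee e d < Ee e x) \<and>
        deriv (deriv (Ee e)) d > 0)"

definition energy :: "('n \<times> 'n) set \<Rightarrow> ('n \<times> 'n \<Rightarrow> real \<Rightarrow> real) \<Rightarrow> real^'d^'n \<Rightarrow> real" where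
  "energy Edges Ee q = (\<Sum>e\<in>Edges. Ee e (norm (q $ fst e - q $ snd e)))"

text \<open>C^m on an open set U (finite-dimensional domain): iterated Frechet derivatives
  D j x [h_1,...,h_j] up to order m exist and are continuous in x.\<close>
definition Ck_on :: "nat \<Rightarrow> 'a::euclidean_space set \<Rightarrow> ('a \<Rightarrow> 'b::real_normed_vector) \<Rightarrow> bool" where
  "Ck_on m U g \<longleftrightarrow> open U \<and>
     (\<exists>D :: nat \<Rightarrow> 'a \<Rightarrow> 'a list \<Rightarrow> 'b.
        (\<forall>x\<in>U. D 0 x [] = g x) \<and>
        (\<forall>j<m. \<forall>hs. length hs = j \<longrightarrow>
           (\<forall>x\<in>U. ((\<lambda>y. D j y hs) has_derivative (\<lambda>h. D (Suc j) x (h # hs))) (at x))) \<and>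
        (\<forall>j\<le>m. \<forall>hs. length hs = j \<longrightarrow> continuous_on U (\<lambda>y. D j y hs)))"

definition test_family :: "'a::real_normed_vector set \<Rightarrow> real \<Rightarrow> 's set \<Rightarrow> (real \<Rightarrow> 's \<Rightarrow> 'a) \<Rightarrow> bool" where
  "test_family V \<epsilon> S z \<longleftrightarrow> \<epsilon> > 0 \<and>
     (\<forall>z0\<in>S. real_analytic_on {0..\<epsilon>} (\<lambda>t. z t z0) \<and> (\<exists>t\<in>{0..\<epsilon>}. z t z0 \<noteq> z 0 z0) \<and>
             z 0 z0 = 0 \<and> (\<forall>t\<in>{0..\<epsilon>}. z t z0 \<in> V))"

definition indicative :: "'a::euclidean_space set \<Rightarrow> real \<Rightarrow> 's::euclidean_space set
      \<Rightarrow> (real \<Rightarrow> 's \<Rightarrow> 'a) \<Rightarrow> ('a \<Rightarrow> real) \<Rightarrow> nat \<Rightarrow> bool" where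
  "indicative V \<epsilon> S z f k \<longleftrightarrow>
     test_family V \<epsilon> S z \<and>
     compact S \<and>
     (\<exists>U. {0..\<epsilon>} \<times> S \<subseteq> U \<and> Ck_on (2*k+1) U (\<lambda>(t,z0). z t z0)) \<and>
     (\<forall>\<delta>. 0 < \<delta> \<and> \<delta> \<le> \<epsilon> \<longrightarrow>
        (\<exists>r>0. \<forall>q\<in>V. norm q < r \<longrightarrow> (\<exists>z0\<in>S. \<exists>t\<in>{0..\<delta>}. q = z t z0))) \<and>
     (\<forall>z0\<in>S. \<forall>i<2*k. (vderiv ^^ i) (\<lambda>t. f (z t z0)) 0 = 0)"

end

theory Submission
  imports Defs "HOL-Complex_Analysis.Complex_Singularities"
begin

(* Along a test trajectory the squared length of every bar differs from its rest value only at
   order t^k: the flex keeps it fixed to order k - 1, replacing t by y t preserves this, and the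
   term t^k q enters at order k.  Each bar energy has a critical point at the rest length, so the
   energy changes quadratically in the length change, i.e. only at order t^(2k).  To multiply and
   compose such orders freely, all functions are extended holomorphically to a complex disc, where
   vanishing to order n at a means f w = (w - a)^n * g w with g holomorphic.

   For the covering property, K = span {p'} lets every nearby configuration be written as
   (sum of s^j p^(j)) + w with w in K-bar; the time tau with (s/tau)^2 + (|w|/tau^k)^2 = 1 exhibits
   it as the point at time tau of the trajectory with parameters (s/tau, w/tau^k). *)

section \<open>Zeros of holomorphic functions\<close>

definition vanishes_to_order :: "nat \<Rightarrow> (complex \<Rightarrow> complex) \<Rightarrow> complex \<Rightarrow> bool" where
  "vanishes_to_order n f a \<longleftrightarrow>
     (\<exists>r>0. \<exists>g. g holomorphic_on ball a r \<and> (\<forall>w\<in>ball a r. f w = (w - a)^n * g w))"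

lemma vanishes_to_orderI:
  assumes "r > 0" "g holomorphic_on ball a r" "\<And>w. w \<in> ball a r \<Longrightarrow> f w = (w - a)^n * g w"
  shows "vanishes_to_order n f a"
  unfolding vanishes_to_order_def using assms by blast

lemma vanishes_to_order_sub_if_higher_deriv_eq_0:
  assumes hol: "f holomorphic_on ball a r" and "r > 0" "0 < n"
    and van: "\<And>i. 0 < i \<Longrightarrow> i < n \<Longrightarrow> (deriv ^^ i) f a = 0"
  shows "vanishes_to_order n (\<lambda>w. f w - f a) a"
proof -
  define c where "c i = (deriv ^^ i) f a / fact i" for i
  define g where "g w = (\<Sum>i. c (i + n) * (w - a)^i)" for w
  have g_sums: "(\<lambda>i. c (i + n) * (w - a)^i) sums g w"
    and f_eq: "f w - f a = (w - a)^n * g w" if w: "w \<in> ball a r" for w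
  proof -
    have "(\<lambda>i. c i * (w - a)^i) sums f w"
      unfolding c_def by (rule holomorphic_power_series[OF hol w])
    moreover have "(\<Sum>i<n. c i * (w - a)^i) = f a"
      using \<open>0 < n\<close> van
      by (subst sum.mono_neutral_right[of "{..<n}" "{0}"]) (auto simp: c_def)
    ultimately have shifted: "(\<lambda>i. c (i + n) * (w - a)^(i + n)) sums (f w - f a)"
      using sums_iff_shift'[of "\<lambda>i. c i * (w - a)^i" n "f w"] by simp
    have "summable (\<lambda>i. c (i + n) * (w - a)^i)"
    proof (cases "w = a")
      case False
      have "summable (\<lambda>i. c (i + n) * (w - a)^(i + n) / (w - a)^n)"
        using summable_divide[OF sums_summable[OF shifted]] .
      then show ?thesis
        using False by (simp add: power_add)
    qed (simp add: summable_0_powser)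
    then show "(\<lambda>i. c (i + n) * (w - a)^i) sums g w"
      by (simp add: g_def summable_sums)
    from sums_mult[OF this, of "(w - a)^n"] show "f w - f a = (w - a)^n * g w"
      by (intro sums_unique2[OF shifted]) (simp add: power_add mult_ac)
  qed
  have "g holomorphic_on ball a r"
    using g_sums by (rule power_series_holomorphic)
  from vanishes_to_orderI[OF \<open>r > 0\<close> this f_eq] show ?thesis .
qed

lemma higher_deriv_power_mult_eq_0:
  assumes "g holomorphic_on ball a r" "r > 0" "i < n"
  shows "(deriv ^^ i) (\<lambda>w. (w - a)^n * g w) a = 0"
proof -
  have "(deriv ^^ i) (\<lambda>w. (w - a)^n * g w) a =
        (\<Sum>j=0..i. of_nat (i choose j) * (deriv ^^ j) (\<lambda>w. (w - a)^n) a * (deriv ^^ (i - j)) g a)"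
    by (rule higher_deriv_mult[of _ "ball a r"]) (use assms in \<open>auto intro!: holomorphic_intros\<close>)
  also have "\<dots> = 0"
    using \<open>i < n\<close> by (intro sum.neutral) (simp add: higher_deriv_power)
  finally show ?thesis .
qed

lemma vanishes_to_order_add:
  assumes "vanishes_to_order n f a" "vanishes_to_order n g a"
  shows "vanishes_to_order n (\<lambda>w. f w + g w) a"
proof -
  obtain r1 f1 where r1: "r1 > 0" "f1 holomorphic_on ball a r1" "\<forall>w\<in>ball a r1. f w = (w - a)^n * f1 w"
    using assms(1) unfolding vanishes_to_order_def by blast
  obtain r2 g1 where r2: "r2 > 0" "g1 holomorphic_on ball a r2" "\<forall>w\<in>ball a r2. g w = (w - a)^n * g1 w"
    using assms(2) unfolding vanishes_to_order_def by blast
  have "(\<lambda>w. f1 w + g1 w) holomorphic_on ball a (min r1 r2)"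
    using r1(2) r2(2) by (intro holomorphic_intros) (auto elim!: holomorphic_on_subset)
  then show ?thesis
    by (rule vanishes_to_orderI[rotated]) (use r1 r2 in \<open>auto simp: algebra_simps\<close>)
qed

lemma vanishes_to_order_sum:
  assumes "finite A" "\<And>x. x \<in> A \<Longrightarrow> vanishes_to_order n (f x) a"
  shows "vanishes_to_order n (\<lambda>w. \<Sum>x\<in>A. f x w) a"
  using assms
proof (induction A rule: finite_induct)
  case empty
  show ?case
    by (rule vanishes_to_orderI[of 1 "\<lambda>_. 0"]) auto
next
  case (insert x A)
  then show ?case
    by (simp add: vanishes_to_order_add)
qed

lemma vanishes_to_order_compose:
  assumes f: "vanishes_to_order m (\<lambda>w. f w - f b) b"
    and g: "vanishes_to_order n (\<lambda>t. g t - b) a" and "0 < n"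
  shows "vanishes_to_order (m * n) (\<lambda>t. f (g t) - f b) a"
proof -
  obtain r1 \<Phi> where r1: "r1 > 0" and \<Phi>: "\<Phi> holomorphic_on ball b r1"
    and f_eq: "\<forall>w\<in>ball b r1. f w - f b = (w - b)^m * \<Phi> w"
    using f unfolding vanishes_to_order_def by blast
  obtain r2 \<psi> where r2: "r2 > 0" and \<psi>: "\<psi> holomorphic_on ball a r2"
    and g_eq: "\<forall>t\<in>ball a r2. g t - b = (t - a)^n * \<psi> t"
    using g unfolding vanishes_to_order_def by blast
  have g_hol: "g holomorphic_on ball a r2"
  proof (rule holomorphic_transform)
    show "(\<lambda>t. b + (t - a)^n * \<psi> t) holomorphic_on ball a r2"
      by (intro holomorphic_intros \<psi>)
  qed (use g_eq in \<open>auto simp: algebra_simps\<close>)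
  have "g a = b"
    using g_eq[rule_format, of a] r2 \<open>0 < n\<close> by (simp add: power_0_left)
  moreover have "continuous_on (ball a r2) g"
    by (rule holomorphic_on_imp_continuous_on[OF g_hol])
  ultimately obtain d where d: "d > 0" "\<forall>t\<in>ball a r2. dist t a < d \<longrightarrow> dist (g t) b < r1"
    using r1 r2 unfolding continuous_on_iff by (metis centre_in_ball)
  define r3 where "r3 = min d r2"
  have r3: "r3 > 0" "ball a r3 \<subseteq> ball a r2"
    using d r2 by (auto simp: r3_def)
  have g_into: "g t \<in> ball b r1" if "t \<in> ball a r3" for t
    using d that by (auto simp: r3_def dist_commute)
  show ?thesis
  proof (rule vanishes_to_orderI[of r3 "\<lambda>t. \<psi> t ^ m * \<Phi> (g t)"])
    have "(\<Phi> \<circ> g) holomorphic_on ball a r3"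
      using holomorphic_on_subset[OF g_hol r3(2)] \<Phi> g_into
      by (intro holomorphic_on_compose_gen) auto
    then show "(\<lambda>t. \<psi> t ^ m * \<Phi> (g t)) holomorphic_on ball a r3"
      using holomorphic_on_subset[OF \<psi> r3(2)] by (auto simp: o_def intro!: holomorphic_intros)
  next
    fix t assume t: "t \<in> ball a r3"
    then have "f (g t) - f b = (g t - b)^m * \<Phi> (g t)"
      using f_eq g_into by blast
    also have "\<dots> = (t - a)^(m * n) * (\<psi> t ^ m * \<Phi> (g t))"
      using g_eq t r3(2) by (auto simp: power_mult_distrib power_mult[symmetric] mult.commute)
    finally show "f (g t) - f b = (t - a)^(m * n) * (\<psi> t ^ m * \<Phi> (g t))" .
  qed (fact r3)
qed

section \<open>Holomorphic extensions of real functions\<close>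

lemma of_real_restriction_has_derivative:
  fixes G :: "complex \<Rightarrow> complex" and \<phi> :: "real \<Rightarrow> real"
  assumes G': "(G has_field_derivative c) (at (of_real x))" and "open S" "x \<in> S"
    and G_real: "\<And>y. y \<in> S \<Longrightarrow> G (of_real y) = of_real (\<phi> y)"
  shows "(\<phi> has_real_derivative Re c) (at x)" and "c = of_real (Re c)"
proof -
  have "((\<lambda>y. of_real (\<phi> y) :: complex) has_vector_derivative c) (at x)"
    using has_vector_derivative_real_field[OF G'] \<open>open S\<close> \<open>x \<in> S\<close> G_real
    by (rule has_vector_derivative_transform_within_open) auto
  from bounded_linear.has_vector_derivative[OF bounded_linear_Re this]
       bounded_linear.has_vector_derivative[OF bounded_linear_Im this]
  have Re_deriv: "(\<phi> has_vector_derivative Re c) (at x)"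
    and Im_deriv: "((\<lambda>_. 0) has_vector_derivative Im c) (at x)"
    by simp_all
  from Re_deriv show "(\<phi> has_real_derivative Re c) (at x)"
    by (simp add: has_real_derivative_iff_has_vector_derivative)
  have "Im c = 0"
    using vector_derivative_unique_at[OF Im_deriv has_vector_derivative_const] .
  then show "c = of_real (Re c)"
    by (simp add: complex_eq_iff)
qed

lemma higher_deriv_of_real_restriction:
  fixes G :: "complex \<Rightarrow> complex" and \<phi> :: "real \<Rightarrow> real"
  assumes hol: "G holomorphic_on ball (of_real a) r"
    and G_real: "\<And>x. x \<in> ball a r \<Longrightarrow> G (of_real x) = of_real (\<phi> x)"
    and "x \<in> ball a r"
  shows "(deriv ^^ i) G (of_real x) = of_real ((vderiv ^^ i) \<phi> x)"
  using \<open>x \<in> ball a r\<close>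
proof (induction i arbitrary: x)
  case 0
  then show ?case by (simp add: G_real)
next
  case (Suc i)
  have "of_real x \<in> ball (of_real a :: complex) r"
    using Suc.prems by (simp add: dist_of_real)
  from has_field_derivative_higher_deriv[OF hol open_ball this]
  have "((deriv ^^ i) G has_field_derivative (deriv ^^ Suc i) G (of_real x)) (at (of_real x))" .
  note restr = of_real_restriction_has_derivative[OF this open_ball Suc.prems Suc.IH]
  have "(vderiv ^^ Suc i) \<phi> x = vector_derivative ((vderiv ^^ i) \<phi>) (at x)"
    unfolding funpow.simps o_apply vderiv_def[of "(vderiv ^^ i) \<phi>"] ..
  also have "\<dots> = Re ((deriv ^^ Suc i) G (of_real x))"
    using restr(1) by (simp add: has_real_derivative_iff_has_vector_derivative vector_derivative_at)
  finally have "(vderiv ^^ Suc i) \<phi> x = Re ((deriv ^^ Suc i) G (of_real x))" .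
  with restr(2) show ?case by simp
qed

lemma vderiv_eq_0_if_vanishes_to_order:
  fixes F :: "complex \<Rightarrow> complex" and \<phi> :: "real \<Rightarrow> real"
  assumes "vanishes_to_order n F (of_real a)" "\<rho> > 0"
    and F_real: "\<And>x. x \<in> ball a \<rho> \<Longrightarrow> F (of_real x) = of_real (\<phi> x)" and "i < n"
  shows "(vderiv ^^ i) \<phi> a = 0"
proof -
  obtain r g where "r > 0" and g: "g holomorphic_on ball (of_real a) r"
    and F_eq: "\<forall>w\<in>ball (of_real a) r. F w = (w - of_real a)^n * g w"
    using assms(1) unfolding vanishes_to_order_def by blast
  define R where "R = min r \<rho>"
  have "R > 0" "ball (of_real a :: complex) R \<subseteq> ball (of_real a) r"
    using \<open>r > 0\<close> \<open>\<rho> > 0\<close> by (auto simp: R_def)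
  then have g_R: "g holomorphic_on ball (of_real a) R"
    using holomorphic_on_subset[OF g] by blast
  have "(\<lambda>w. (w - of_real a)^n * g w) holomorphic_on ball (of_real a) R"
    by (intro holomorphic_intros g_R)
  moreover have "(of_real x - of_real a)^n * g (of_real x) = of_real (\<phi> x)" if "x \<in> ball a R" for x
  proof -
    have "of_real x \<in> ball (of_real a :: complex) r"
      using that by (simp add: R_def dist_of_real)
    then show ?thesis
      using F_eq F_real[of x] that by (simp add: R_def)
  qed
  ultimately have "(deriv ^^ i) (\<lambda>w. (w - of_real a)^n * g w) (of_real a) = of_real ((vderiv ^^ i) \<phi> a)"
    using \<open>R > 0\<close> by (intro higher_deriv_of_real_restriction) auto
  moreover have "(deriv ^^ i) (\<lambda>w. (w - of_real a)^n * g w) (of_real a) = 0"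
    using g_R \<open>R > 0\<close> \<open>i < n\<close> by (rule higher_deriv_power_mult_eq_0)
  ultimately show ?thesis by simp
qed

lemma summable_complex_powser_if_real_sums:
  fixes a :: "nat \<Rightarrow> real" and w :: complex
  assumes E_sums: "\<forall>x\<in>ball d r. (\<lambda>n. (x - d)^n *\<^sub>R a n) sums E x"
    and w: "w \<in> ball (of_real d) r"
  shows "summable (\<lambda>n. of_real (a n) * (w - of_real d)^n)"
proof -
  have w_r: "norm (w - of_real d) < r"
    using w by (simp add: dist_norm norm_minus_commute)
  obtain \<rho> where w_\<rho>: "norm (w - of_real d) < \<rho>" and "\<rho> < r"
    using dense[OF w_r] by blast
  then have "0 \<le> \<rho>"
    using norm_ge_zero[of "w - of_real d"] by linarith
  with \<open>\<rho> < r\<close> have "d + \<rho> \<in> ball d r"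
    by (simp add: dist_real_def)
  from bspec[OF E_sums this] have "summable (\<lambda>n. a n * \<rho>^n)"
    by (simp add: mult.commute sums_summable)
  then have "summable (\<lambda>n. of_real (a n * \<rho>^n) :: complex)"
    by (rule summable_of_real)
  then have "summable (\<lambda>n. of_real (a n) * (of_real \<rho> :: complex)^n)"
    by simp
  from powser_insidea[OF this] w_\<rho> \<open>0 \<le> \<rho>\<close>
  have "summable (\<lambda>n. norm (of_real (a n) * (w - of_real d)^n))"
    by simp
  then show ?thesis
    by (rule summable_norm_cancel)
qed

lemma real_analytic_holomorphic_extension:
  fixes E :: "real \<Rightarrow> real"
  assumes "real_analytic_on {d} E"
  obtains r G where "r > 0" "G holomorphic_on ball (of_real d) r"
    "\<And>x. x \<in> ball d r \<Longrightarrow> G (of_real x) = of_real (E x)"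
proof -
  obtain r and a :: "nat \<Rightarrow> real" where "r > 0"
    and E_sums: "\<forall>x\<in>ball d r. (\<lambda>n. (x - d)^n *\<^sub>R a n) sums E x"
    using assms unfolding real_analytic_on_def by blast
  define G where "G w = (\<Sum>n. of_real (a n) * (w - of_real d)^n)" for w :: complex
  have G_sums: "(\<lambda>n. of_real (a n) * (w - of_real d)^n) sums G w" if "w \<in> ball (of_real d) r" for w
    unfolding G_def using summable_complex_powser_if_real_sums[OF E_sums that] by (rule summable_sums)
  show ?thesis
  proof
    show "G holomorphic_on ball (of_real d) r"
      using G_sums by (rule power_series_holomorphic)
  next
    fix x assume x: "x \<in> ball d r"
    then have "(\<lambda>n. of_real (a n) * (of_real x - of_real d)^n) sums G (of_real x)"
      by (intro G_sums) (simp add: dist_of_real)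
    moreover have "(\<lambda>n. of_real ((x - d)^n *\<^sub>R a n)) sums (of_real (E x) :: complex)"
      using bspec[OF E_sums x] by (rule sums_of_real)
    then have "(\<lambda>n. of_real (a n) * (of_real x - of_real d)^n) sums (of_real (E x) :: complex)"
      by (simp add: mult.commute)
    ultimately show "G (of_real x) = of_real (E x)"
      by (rule sums_unique2)
  qed (fact \<open>r > 0\<close>)
qed

lemma local_min_vanishes_to_order_2:
  fixes G :: "complex \<Rightarrow> complex" and E :: "real \<Rightarrow> real"
  assumes hol: "G holomorphic_on ball (of_real d) r" and "r > 0"
    and G_real: "\<And>x. x \<in> ball d r \<Longrightarrow> G (of_real x) = of_real (E x)"
    and min: "\<And>x. \<bar>x - d\<bar> < \<rho> \<Longrightarrow> E d \<le> E x" and "\<rho> > 0"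
  shows "vanishes_to_order 2 (\<lambda>w. G w - G (of_real d)) (of_real d)"
proof (rule vanishes_to_order_sub_if_higher_deriv_eq_0[OF hol \<open>r > 0\<close>])
  fix i :: nat assume "0 < i" "i < 2"
  then have "i = 1" by simp
  have "d \<in> ball d r"
    using \<open>r > 0\<close> by simp
  have "(G has_field_derivative deriv G (of_real d)) (at (of_real d))"
    using has_field_derivative_higher_deriv[OF hol open_ball, of "of_real d" 0] \<open>r > 0\<close> by simp
  note restr = of_real_restriction_has_derivative[OF this open_ball \<open>d \<in> ball d r\<close>, of E]
  have "(E has_real_derivative Re (deriv G (of_real d))) (at d)"
    by (rule restr(1)) (simp add: G_real)
  then have "Re (deriv G (of_real d)) = 0"
    using \<open>\<rho> > 0\<close> by (rule DERIV_local_min) (simp add: min abs_minus_commute)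
  moreover have "deriv G (of_real d) = of_real (Re (deriv G (of_real d)))"
    by (rule restr(2)) (simp add: G_real)
  ultimately show "(deriv ^^ i) G (of_real d) = 0"
    using \<open>i = 1\<close> by simp
qed simp

lemma vanishes_to_order_energy_term:
  fixes G M :: "complex \<Rightarrow> complex" and E :: "real \<Rightarrow> real"
  assumes hol: "G holomorphic_on ball (of_real d) r" and "r > 0"
    and G_real: "\<And>x. x \<in> ball d r \<Longrightarrow> G (of_real x) = of_real (E x)"
    and min: "\<And>x. \<bar>x - d\<bar> < \<rho> \<Longrightarrow> E d \<le> E x" and "\<rho> > 0"
    and "d > 0" and M: "vanishes_to_order k (\<lambda>t. M t - of_real (d^2)) 0" and "0 < k"
  shows "vanishes_to_order (2 * k) (\<lambda>t. G (csqrt (M t)) - G (of_real d)) 0"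
proof -
  have "csqrt holomorphic_on ball (of_real (d^2)) (d^2)"
  proof (rule holomorphic_on_subset[OF holomorphic_on_csqrt], safe)
    fix w :: complex assume "w \<in> ball (of_real (d^2)) (d^2)" "w \<in> \<real>\<^sub>\<le>\<^sub>0"
    then have "norm (of_real (d^2) - w) < d^2" "Re w \<le> 0"
      by (auto simp: dist_norm complex_nonpos_Reals_iff)
    then show False
      using abs_Re_le_cmod[of "of_real (d^2) - w"] by simp
  qed
  from vanishes_to_order_sub_if_higher_deriv_eq_0[OF this]
  have "vanishes_to_order 1 (\<lambda>w. csqrt w - csqrt (of_real (d^2))) (of_real (d^2))"
    using \<open>d > 0\<close> by auto
  from vanishes_to_order_compose[OF this M \<open>0 < k\<close>]
  have "vanishes_to_order k (\<lambda>t. csqrt (M t) - of_real d) 0"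
    using \<open>d > 0\<close> by (simp add: csqrt_of_real_nonneg)
  with local_min_vanishes_to_order_2[OF hol \<open>r > 0\<close> G_real min \<open>\<rho> > 0\<close>] show ?thesis
    using vanishes_to_order_compose \<open>0 < k\<close> by fastforce
qed

definition complex_sqnorm_poly :: "(nat \<Rightarrow> real^'d) \<Rightarrow> nat \<Rightarrow> complex \<Rightarrow> complex" where
  "complex_sqnorm_poly c n t = (\<Sum>i\<in>UNIV. (\<Sum>j\<le>n. t^j * of_real (c j $ i))^2)"

lemma complex_sqnorm_poly_of_real:
  "complex_sqnorm_poly c n (of_real x) = of_real ((norm (\<Sum>j\<le>n. x^j *\<^sub>R c j))^2)"
proof -
  have sqnorm: "(norm v)^2 = (\<Sum>i\<in>UNIV. (v $ i)^2)" for v :: "real^'d"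
    unfolding power2_norm_eq_inner inner_vec_def by (simp add: power2_eq_square)
  show ?thesis
    unfolding sqnorm by (simp add: complex_sqnorm_poly_def sum_component)
qed

lemma holomorphic_on_complex_sqnorm_poly [holomorphic_intros]:
  "complex_sqnorm_poly c n holomorphic_on S"
  unfolding complex_sqnorm_poly_def [abs_def] by (intro holomorphic_intros)

lemma complex_sqnorm_poly_scale:
  "complex_sqnorm_poly c n (of_real y * t) = complex_sqnorm_poly (\<lambda>j. y^j *\<^sub>R c j) n t"
  by (simp add: complex_sqnorm_poly_def power_mult_distrib mult_ac)

lemma vanishes_to_order_complex_sqnorm_poly_diff:
  fixes c c' :: "nat \<Rightarrow> real^'d"
  assumes "\<And>j. j < k \<Longrightarrow> c j = c' j"
  shows "vanishes_to_order k (\<lambda>t. complex_sqnorm_poly c n t - complex_sqnorm_poly c' n t) 0"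
proof -
  define P where "P c i t = (\<Sum>j\<le>n. t^j * of_real (c j $ i))" for c :: "nat \<Rightarrow> real^'d" and i and t :: complex
  define Q where "Q i t = (\<Sum>j\<le>n. t^(j - k) * of_real (c j $ i - c' j $ i))" for i and t :: complex
  have P_diff: "P c i t - P c' i t = t^k * Q i t" for i t
  proof -
    have "P c i t - P c' i t = (\<Sum>j\<le>n. t^j * of_real (c j $ i - c' j $ i))"
      by (simp add: P_def algebra_simps sum_subtractf)
    also have "\<dots> = (\<Sum>j\<le>n. t^k * (t^(j - k) * of_real (c j $ i - c' j $ i)))"
    proof (rule sum.cong)
      fix j show "t^j * of_real (c j $ i - c' j $ i) = t^k * (t^(j - k) * of_real (c j $ i - c' j $ i))"
        using assms[of j] by (cases "j < k") (auto simp: mult.assoc power_add[symmetric])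
    qed simp
    finally show ?thesis
      by (simp add: Q_def sum_distrib_left)
  qed
  show ?thesis
  proof (rule vanishes_to_orderI[of 1 "\<lambda>t. \<Sum>i\<in>UNIV. Q i t * (P c i t + P c' i t)"])
    show "(\<lambda>t. \<Sum>i\<in>UNIV. Q i t * (P c i t + P c' i t)) holomorphic_on ball 0 1"
      unfolding P_def Q_def by (intro holomorphic_intros)
  next
    fix t :: complex
    have "complex_sqnorm_poly c n t - complex_sqnorm_poly c' n t
        = (\<Sum>i\<in>UNIV. (P c i t - P c' i t) * (P c i t + P c' i t))"
      by (simp add: complex_sqnorm_poly_def P_def power2_eq_square algebra_simps sum_subtractf)
    then show "complex_sqnorm_poly c n t - complex_sqnorm_poly c' n t
        = (t - 0)^k * (\<Sum>i\<in>UNIV. Q i t * (P c i t + P c' i t))"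
      by (simp add: P_diff sum_distrib_left mult.assoc)
  qed simp
qed

lemma vanishes_to_order_scaled_sqnorm_poly:
  fixes c c' :: "nat \<Rightarrow> real^'d"
  assumes flex: "k_vanishing (k - 1) (\<lambda>x. (norm (\<Sum>j\<le>k. x^j *\<^sub>R c j))^2)" and "0 < k"
    and c': "\<And>j. j < k \<Longrightarrow> c' j = y^j *\<^sub>R c j"
  shows "vanishes_to_order k (\<lambda>t. complex_sqnorm_poly c' k t - of_real ((norm (c 0))^2)) 0"
proof -
  let ?N = "complex_sqnorm_poly c k"
  have N_real: "?N (of_real x) = of_real ((norm (\<Sum>j\<le>k. x^j *\<^sub>R c j))^2)" for x
    by (rule complex_sqnorm_poly_of_real)
  have "(deriv ^^ i) ?N 0 = 0" if "0 < i" "i < k" for i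
  proof -
    have "(deriv ^^ i) ?N (of_real 0) = of_real ((vderiv ^^ i) (\<lambda>x. (norm (\<Sum>j\<le>k. x^j *\<^sub>R c j))^2) 0)"
      by (rule higher_deriv_of_real_restriction[of _ 0 1]) (simp_all add: holomorphic_intros N_real)
    with flex that show ?thesis
      by (simp add: k_vanishing_def)
  qed
  then have "vanishes_to_order k (\<lambda>u. ?N u - ?N 0) 0"
    using \<open>0 < k\<close> by (intro vanishes_to_order_sub_if_higher_deriv_eq_0[of _ _ 1]) (auto intro: holomorphic_intros)
  moreover have "vanishes_to_order 1 (\<lambda>t. of_real y * t - 0) 0"
    by (rule vanishes_to_orderI[of 1 "\<lambda>_. of_real y"]) auto
  ultimately have "vanishes_to_order (k * 1) (\<lambda>t. ?N (of_real y * t) - ?N 0) 0"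
    by (rule vanishes_to_order_compose) simp
  then have "vanishes_to_order k (\<lambda>t. complex_sqnorm_poly (\<lambda>j. y^j *\<^sub>R c j) k t - ?N 0) 0"
    by (simp add: complex_sqnorm_poly_scale)
  moreover have "vanishes_to_order k (\<lambda>t. complex_sqnorm_poly c' k t - complex_sqnorm_poly (\<lambda>j. y^j *\<^sub>R c j) k t) 0"
    using c' by (rule vanishes_to_order_complex_sqnorm_poly_diff)
  ultimately have "vanishes_to_order k (\<lambda>t. complex_sqnorm_poly c' k t - ?N 0) 0"
    using vanishes_to_order_add by fastforce
  moreover have "?N 0 = of_real ((norm (c 0))^2)"
  proof -
    have "(\<Sum>j\<le>k. (0::real)^j *\<^sub>R c j) = (\<Sum>j\<le>k. if j = 0 then c j else 0)"
      by (intro sum.cong) (auto simp: power_0_left)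
    then show ?thesis
      using N_real[of 0] by simp
  qed
  ultimately show ?thesis
    by simp
qed

section \<open>The energy along the test trajectories\<close>

text \<open>The paper's test family \<open>\<delta>p(t; y\<^sub>0, p\<^sub>0\<^sup>(\<^sup>k\<^sup>))\<close>, with \<open>pp j\<close> standing for \<open>p\<^sup>(\<^sup>j\<^sup>)\<close>.\<close>

definition test_trajectory :: "(nat \<Rightarrow> 'a::real_vector) \<Rightarrow> nat \<Rightarrow> real \<Rightarrow> real \<times> 'a \<Rightarrow> 'a" where
  "test_trajectory pp k t yq = (\<Sum>j=1..k-1. (fst yq ^ j * t^j) *\<^sub>R pp j) + (t^k) *\<^sub>R snd yq"

lemma test_trajectory_at_0: "0 < k \<Longrightarrow> test_trajectory pp k 0 yq = 0"
  by (simp add: test_trajectory_def power_0_left)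

lemma test_trajectory_rescale:
  assumes "\<tau> \<noteq> 0"
  shows "test_trajectory pp k \<tau> (s / \<tau>, (1 / \<tau>^k) *\<^sub>R w) = (\<Sum>j=1..k-1. s^j *\<^sub>R pp j) + w"
  using assms by (simp add: test_trajectory_def power_divide)

lemma sum_atMost_split_first_last:
  fixes a c :: "'a::real_vector"
  assumes "0 < k"
  shows "(\<Sum>j\<le>k. t^j *\<^sub>R (if j = 0 then a else if j < k then b j else c))
       = a + (\<Sum>j=1..k-1. t^j *\<^sub>R b j) + t^k *\<^sub>R c"
proof -
  obtain m where k: "k = Suc m"
    using assms gr0_implies_Suc by blast
  have "(\<Sum>j=1..m. t^j *\<^sub>R (if j = 0 then a else if j < Suc m then b j else c)) = (\<Sum>j=1..m. t^j *\<^sub>R b j)"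
    by (intro sum.cong) auto
  then show ?thesis
    unfolding k by (simp add: sum.atMost_Suc atMost_atLeast0 sum.atLeast_Suc_atMost)
qed

lemma sum_split_first:
  fixes f :: "nat \<Rightarrow> 'a::comm_monoid_add"
  assumes "2 \<le> k"
  shows "(\<Sum>j=1..k-1. f j) = f 1 + (\<Sum>j=2..k-1. f j)"
  using sum.atLeast_Suc_atMost[of 1 "k - 1" f] assms by (simp add: numeral_2_eq_2)

lemma meas_sum_scaleR:
  "meas (\<Sum>j\<le>n. x^j *\<^sub>R C j) e = (norm (\<Sum>j\<le>n. x^j *\<^sub>R (C j $ fst e - C j $ snd e)))^2"
  by (simp add: meas_def sum_component sum_subtractf scaleR_diff_right)

lemma stiff_bar_energy_edge:
  assumes "stiff_bar_energy Edges p Ee" "e \<in> Edges"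
  defines "d \<equiv> norm (p $ fst e - p $ snd e)"
  obtains r G \<rho> where "d > 0" "r > 0" "G holomorphic_on ball (of_real d) r"
    "\<And>x. x \<in> ball d r \<Longrightarrow> G (of_real x) = of_real (Ee e x)"
    "\<rho> > 0" "\<And>x. \<bar>x - d\<bar> < \<rho> \<Longrightarrow> Ee e d \<le> Ee e x"
proof -
  have "d \<noteq> 0" and analytic: "real_analytic_on {d} (Ee e)"
    and "\<exists>\<rho>>0. \<forall>x. 0 < \<bar>x - d\<bar> \<and> \<bar>x - d\<bar> < \<rho> \<longrightarrow> Ee e d < Ee e x"
    using assms unfolding stiff_bar_energy_def Let_def by auto
  moreover from this(3) obtain \<rho> where "\<rho> > 0" "\<And>x. \<bar>x - d\<bar> < \<rho> \<Longrightarrow> Ee e d \<le> Ee e x"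
    by (metis abs_eq_0 eq_iff_diff_eq_0 less_imp_le order.refl zero_less_abs_iff)
  moreover obtain r G where "r > 0" "G holomorphic_on ball (of_real d) r"
    "\<And>x. x \<in> ball d r \<Longrightarrow> G (of_real x) = of_real (Ee e x)"
    using real_analytic_holomorphic_extension[OF analytic] by blast
  ultimately show ?thesis
    using that by (simp add: d_def)
qed

lemma test_trajectory_sqlength_extension:
  fixes p q :: "real^'d^'n" and pp :: "nat \<Rightarrow> real^'d^'n"
  assumes "0 < k" and flex: "k_vanishing (k - 1) (\<lambda>t. meas (p + (\<Sum>j=1..k-1. t^j *\<^sub>R pp j)) e)"
  obtains M where "vanishes_to_order k (\<lambda>t. M t - of_real ((norm (p $ fst e - p $ snd e))^2)) 0"
    "\<And>x. M (of_real x) = of_real (meas (p + test_trajectory pp k x (y, q)) e)"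
proof -
  define flexc where "flexc j = (if j = 0 then p else if j < k then pp j else 0)" for j
  define testc where "testc j = (if j = 0 then p else if j < k then y^j *\<^sub>R pp j else q)" for j
  define edge where "edge C j = C j $ fst e - C j $ snd e" for C :: "nat \<Rightarrow> real^'d^'n" and j
  have flex_sum: "p + (\<Sum>j=1..k-1. x^j *\<^sub>R pp j) = (\<Sum>j\<le>k. x^j *\<^sub>R flexc j)" for x
    using sum_atMost_split_first_last[OF \<open>0 < k\<close>, of x p pp 0] by (simp add: flexc_def)
  have test_sum: "p + test_trajectory pp k x (y, q) = (\<Sum>j\<le>k. x^j *\<^sub>R testc j)" for x
    using sum_atMost_split_first_last[OF \<open>0 < k\<close>, of x p "\<lambda>j. y^j *\<^sub>R pp j" q]
    by (simp add: testc_def test_trajectory_def mult.commute)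
  have "(\<lambda>x. (norm (\<Sum>j\<le>k. x^j *\<^sub>R edge flexc j))^2) = (\<lambda>t. meas (p + (\<Sum>j=1..k-1. t^j *\<^sub>R pp j)) e)"
    unfolding flex_sum meas_sum_scaleR edge_def ..
  with flex have "k_vanishing (k - 1) (\<lambda>x. (norm (\<Sum>j\<le>k. x^j *\<^sub>R edge flexc j))^2)"
    by simp
  from vanishes_to_order_scaled_sqnorm_poly[OF this \<open>0 < k\<close>, of "edge testc" y]
  have "vanishes_to_order k (\<lambda>t. complex_sqnorm_poly (edge testc) k t - of_real ((norm (p $ fst e - p $ snd e))^2)) 0"
    by (simp add: edge_def flexc_def testc_def scaleR_diff_right)
  moreover have "complex_sqnorm_poly (edge testc) k (of_real x) = of_real (meas (p + test_trajectory pp k x (y, q)) e)" for x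
    unfolding complex_sqnorm_poly_of_real edge_def test_sum meas_sum_scaleR ..
  ultimately show ?thesis
    using that by blast
qed

lemma edge_energy_change_vanishes:
  fixes p :: "real^'d^'n" and z :: "real \<Rightarrow> real^'d^'n" and M :: "complex \<Rightarrow> complex"
  assumes "stiff_bar_energy Edges p Ee" "e \<in> Edges" "isCont z 0" "z 0 = 0" "0 < k"
    and M: "vanishes_to_order k (\<lambda>t. M t - of_real ((norm (p $ fst e - p $ snd e))^2)) 0"
    and M_real: "\<And>x. M (of_real x) = of_real (meas (p + z x) e)"
  obtains T where "vanishes_to_order (2 * k) T 0"
    "\<forall>\<^sub>F x in nhds 0. T (of_real x) = of_real (Ee e (norm ((p + z x) $ fst e - (p + z x) $ snd e))
                                             - Ee e (norm (p $ fst e - p $ snd e)))"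
proof -
  define d where "d = norm (p $ fst e - p $ snd e)"
  define len where "len x = norm ((p + z x) $ fst e - (p + z x) $ snd e)" for x
  obtain r G \<rho> where "d > 0" "r > 0" and G: "G holomorphic_on ball (of_real d) r"
    and G_real: "\<And>x. x \<in> ball d r \<Longrightarrow> G (of_real x) = of_real (Ee e x)"
    and "\<rho> > 0" and min: "\<And>x. \<bar>x - d\<bar> < \<rho> \<Longrightarrow> Ee e d \<le> Ee e x"
    using stiff_bar_energy_edge[OF assms(1,2)] unfolding d_def by blast
  have van: "vanishes_to_order (2 * k) (\<lambda>t. G (csqrt (M t)) - G (of_real d)) 0"
    using G \<open>r > 0\<close> G_real min \<open>\<rho> > 0\<close> \<open>d > 0\<close> M[folded d_def] \<open>0 < k\<close>
    by (rule vanishes_to_order_energy_term)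
  have "isCont len 0"
    unfolding len_def using \<open>isCont z 0\<close> by (intro continuous_intros)
  moreover have "len 0 = d"
    by (simp add: len_def d_def \<open>z 0 = 0\<close>)
  ultimately have "(len \<longlongrightarrow> d) (nhds 0)"
    using tendsto_at_iff_tendsto_nhds[of len 0] by (simp add: isCont_def)
  then have "\<forall>\<^sub>F x in nhds 0. len x \<in> ball d r"
    using \<open>r > 0\<close> by (intro topological_tendstoD) auto
  then have "\<forall>\<^sub>F x in nhds 0. G (csqrt (M (of_real x))) - G (of_real d) = of_real (Ee e (len x) - Ee e d)"
    by eventually_elim (use \<open>r > 0\<close> in \<open>simp add: M_real G_real len_def meas_def\<close>)
  with van show ?thesis
    using that unfolding len_def d_def by blast
qed

lemma vderiv_energy_test_trajectory_eq_0:
  fixes p q :: "real^'d^'n" and pp :: "nat \<Rightarrow> real^'d^'n"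
  assumes sbe: "stiff_bar_energy Edges p Ee" and "0 < k"
    and flex: "\<forall>e\<in>Edges. k_vanishing (k - 1) (\<lambda>t. meas (p + (\<Sum>j=1..k-1. t^j *\<^sub>R pp j)) e)"
    and "i < 2 * k"
  shows "(vderiv ^^ i) (\<lambda>t. energy Edges Ee (p + test_trajectory pp k t (y, q)) - energy Edges Ee p) 0 = 0"
proof -
  define z where "z x = test_trajectory pp k x (y, q)" for x
  define \<Delta>E where "\<Delta>E e x = Ee e (norm ((p + z x) $ fst e - (p + z x) $ snd e))
      - Ee e (norm (p $ fst e - p $ snd e))" for e x
  have "isCont z 0" "z 0 = 0"
    unfolding z_def test_trajectory_def using \<open>0 < k\<close> by (auto intro!: continuous_intros simp: power_0_left)
  have "\<exists>T. vanishes_to_order (2 * k) T 0 \<and> (\<forall>\<^sub>F x in nhds 0. T (of_real x) = of_real (\<Delta>E e x))"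
    if e: "e \<in> Edges" for e
  proof -
    obtain M where "vanishes_to_order k (\<lambda>t. M t - of_real ((norm (p $ fst e - p $ snd e))^2)) 0"
      "\<And>x. M (of_real x) = of_real (meas (p + z x) e)"
      using test_trajectory_sqlength_extension[OF \<open>0 < k\<close>] flex e unfolding z_def by blast
    from edge_energy_change_vanishes[OF sbe e \<open>isCont z 0\<close> \<open>z 0 = 0\<close> \<open>0 < k\<close> this]
    show ?thesis
      unfolding \<Delta>E_def by blast
  qed
  then obtain T where T: "\<And>e. e \<in> Edges \<Longrightarrow> vanishes_to_order (2 * k) (T e) 0"
    "\<And>e. e \<in> Edges \<Longrightarrow> \<forall>\<^sub>F x in nhds 0. T e (of_real x) = of_real (\<Delta>E e x)"
    by metis
  have "\<forall>\<^sub>F x in nhds 0. \<forall>e\<in>Edges. T e (of_real x) = of_real (\<Delta>E e x)"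
    using T(2) by (intro eventually_ball_finite) auto
  then obtain \<rho> where "\<rho> > 0"
    and T_real: "\<And>x. dist x 0 < \<rho> \<Longrightarrow> \<forall>e\<in>Edges. T e (of_real x) = of_real (\<Delta>E e x)"
    unfolding eventually_nhds_metric by blast
  have energy_diff: "energy Edges Ee (p + z x) - energy Edges Ee p = (\<Sum>e\<in>Edges. \<Delta>E e x)" for x
    by (simp add: energy_def \<Delta>E_def sum_subtractf)
  have "vanishes_to_order (2 * k) (\<lambda>t. \<Sum>e\<in>Edges. T e t) (of_real 0)"
    using T(1) by (simp add: vanishes_to_order_sum)
  from vderiv_eq_0_if_vanishes_to_order[OF this \<open>\<rho> > 0\<close> _ \<open>i < 2 * k\<close>] show ?thesis
    by (simp add: T_real energy_diff dist_commute flip: z_def)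
qed

section \<open>The velocity of the flex spans \<open>K\<close>\<close>

lemma has_real_derivative_sqnorm_poly_at_0:
  fixes a :: "'a::real_inner" and v :: "nat \<Rightarrow> 'a"
  assumes "1 \<le> m"
  shows "((\<lambda>t. (norm (a + (\<Sum>j=1..m. t^j *\<^sub>R v j)))^2) has_real_derivative 2 * (a \<bullet> v 1)) (at 0)"
proof -
  define c where "c t = a + (\<Sum>j=1..m. t^j *\<^sub>R v j)" for t :: real
  have "(c has_vector_derivative (\<Sum>j=1..m. (of_nat j * 0^(j - 1)) *\<^sub>R v j)) (at 0)"
    unfolding c_def by (intro derivative_eq_intros) auto
  moreover have "(\<Sum>j=1..m. (of_nat j * (0::real)^(j - 1)) *\<^sub>R v j) = v 1"
    using assms by (subst sum.mono_neutral_right[of "{1..m}" "{1}"]) auto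
  ultimately have c': "(c has_vector_derivative v 1) (at 0)"
    by simp
  have "((\<lambda>t. c t \<bullet> c t) has_vector_derivative (c 0 \<bullet> v 1 + v 1 \<bullet> c 0)) (at 0)"
    by (rule bounded_bilinear.has_vector_derivative[OF bounded_bilinear_inner c' c'])
  moreover have "c 0 = a"
    by (simp add: c_def power_0_left)
  ultimately show ?thesis
    by (simp add: c_def power2_norm_eq_inner has_real_derivative_iff_has_vector_derivative inner_commute)
qed

lemma subspace_pinned_space: "subspace (pinned_space vert ax l)"
  unfolding subspace_def pinned_space_def pinned_pos_def
  by (auto intro: span_add span_scale span_zero)

lemma subspace_Kspace: "subspace (Kspace vert ax l Edges p)"
proof -
  note V = subspace_pinned_space[of vert ax l]
  have diff_add: "(x + y) $ i - (x + y) $ j = (x $ i - x $ j) + (y $ i - y $ j)"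
    and diff_scale: "(c *\<^sub>R x) $ i - (c *\<^sub>R x) $ j = c *\<^sub>R (x $ i - x $ j)"
    and diff_0: "(0::real^'d^'n) $ i - 0 $ j = 0" for x y :: "real^'d^'n" and c i j
    by (simp_all add: scaleR_diff_right)
  show ?thesis
    unfolding subspace_def Kspace_def mem_Collect_eq
    using subspace_0[OF V] subspace_add[OF V] subspace_scale[OF V]
    by (simp only: diff_add diff_scale diff_0 inner_add_right inner_scaleR_right inner_zero_right) simp
qed

lemma first_coefficient_in_subspace:
  fixes pp :: "nat \<Rightarrow> 'a::real_vector"
  assumes V: "subspace V" and "p \<in> V" "\<epsilon> > 0"
    and curve: "\<And>t. t \<in> ball 0 \<epsilon> \<Longrightarrow> p + (\<Sum>j=1..k-1. (t^j) *\<^sub>R pp j) \<in> V"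
    and higher: "\<forall>j\<in>{2..k-1}. pp j \<in> V" and "2 \<le> k"
  shows "pp 1 \<in> V"
proof -
  define t where "t = \<epsilon> / 2"
  have "t \<noteq> 0" "t \<in> ball 0 \<epsilon>"
    using \<open>\<epsilon> > 0\<close> by (auto simp: t_def)
  from subspace_diff[OF V curve[OF this(2)] \<open>p \<in> V\<close>]
  have "t *\<^sub>R pp 1 + (\<Sum>j=2..k-1. (t^j) *\<^sub>R pp j) \<in> V"
    unfolding sum_split_first[OF \<open>2 \<le> k\<close>] by simp
  moreover have "(\<Sum>j=2..k-1. (t^j) *\<^sub>R pp j) \<in> V"
    using higher by (intro subspace_sum[OF V] subspace_scale[OF V]) auto
  ultimately have "t *\<^sub>R pp 1 \<in> V"
    using subspace_diff[OF V] by fastforce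
  then show "pp 1 \<in> V"
    using subspace_scale[OF V, of "t *\<^sub>R pp 1" "inverse t"] \<open>t \<noteq> 0\<close> by simp
qed

lemma edge_orthogonal_first_order:
  fixes p :: "real^'d^'n" and pp :: "nat \<Rightarrow> real^'d^'n"
  assumes flex: "k_vanishing (k - 1) (\<lambda>t. meas (p + (\<Sum>j=1..k-1. (t^j) *\<^sub>R pp j)) e)" and "2 \<le> k"
  shows "(p $ fst e - p $ snd e) \<bullet> (pp 1 $ fst e - pp 1 $ snd e) = 0"
proof -
  let ?m = "\<lambda>t. meas (p + (\<Sum>j=1..k-1. (t^j) *\<^sub>R pp j)) e"
  have m_eq: "?m = (\<lambda>t. (norm ((p $ fst e - p $ snd e) + (\<Sum>j=1..k-1. t^j *\<^sub>R (pp j $ fst e - pp j $ snd e))))^2)"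
    by (simp add: meas_def sum_component sum_subtractf scaleR_diff_right algebra_simps)
  have "(?m has_vector_derivative 2 * ((p $ fst e - p $ snd e) \<bullet> (pp 1 $ fst e - pp 1 $ snd e))) (at 0)"
    unfolding m_eq has_real_derivative_iff_has_vector_derivative[symmetric]
    using \<open>2 \<le> k\<close> by (intro has_real_derivative_sqnorm_poly_at_0) simp
  moreover have "(1::nat) \<in> {1..k-1}"
    using \<open>2 \<le> k\<close> by simp
  with flex have "vector_derivative ?m (at 0) = 0"
    unfolding k_vanishing_def by (fastforce simp: vderiv_def)
  ultimately show ?thesis
    by (simp add: vector_derivative_at)
qed

lemma flex_velocity_in_Kspace:
  fixes p :: "real^'d^'n" and pp :: "nat \<Rightarrow> real^'d^'n"
  assumes "is_pinned vert ax l p"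
    and flex: "is_flex vert ax l Edges p (\<lambda>t. p + (\<Sum>j=1..k-1. (t^j) *\<^sub>R pp j)) 1 (k - 1)"
    and "2 \<le> k" and "\<forall>j\<in>{2..k-1}. pp j \<in> pinned_space vert ax l"
  shows "pp 1 \<in> Kspace vert ax l Edges p"
proof -
  obtain \<epsilon> where "\<epsilon> > 0" and "\<forall>t\<in>ball 0 \<epsilon>. pinned_pos vert ax l (p + (\<Sum>j=1..k-1. (t^j) *\<^sub>R pp j))"
    using flex unfolding is_flex_def by auto
  moreover have "p \<in> pinned_space vert ax l"
    using assms(1) unfolding is_pinned_def pinned_space_def by simp
  ultimately have "pp 1 \<in> pinned_space vert ax l"
    using subspace_pinned_space assms(3,4)
    by (intro first_coefficient_in_subspace) (auto simp: pinned_space_def)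
  moreover have "(p $ fst e - p $ snd e) \<bullet> (pp 1 $ fst e - pp 1 $ snd e) = 0" if "e \<in> Edges" for e
    using flex that \<open>2 \<le> k\<close> unfolding is_flex_def by (blast intro: edge_orthogonal_first_order)
  ultimately show ?thesis
    unfolding Kspace_def by blast
qed

lemma subspace_dim_1_eq_span:
  fixes S :: "'a::euclidean_space set"
  assumes "subspace S" "dim S = 1" "v \<in> S" "v \<noteq> 0"
  shows "S = span {v}"
proof -
  have "span {v} \<subseteq> S"
    using assms by (simp add: span_minimal)
  from subspace_dim_equal[OF subspace_span[of "{v}"] assms(1) this] show ?thesis
    using assms(2,4) by simp
qed

lemma linear_functional_vanishing_on_subspace:
  fixes K :: "'a::euclidean_space set"
  assumes "subspace K" "v \<notin> K"
  obtains g :: "'a \<Rightarrow> real" where "linear g" "g v = 1" "\<forall>b\<in>K. g b = 0"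
proof -
  obtain u w where "u \<in> span K" and w_orth: "\<And>b. b \<in> span K \<Longrightarrow> orthogonal w b" and "v = u + w"
    using orthogonal_subspace_decomp_exists[of K v] by blast
  moreover have "span K = K"
    using assms(1) by (simp add: span_eq_iff)
  ultimately have "w \<noteq> 0"
    using assms(2) by auto
  show ?thesis
  proof
    show "linear (\<lambda>x. (x \<bullet> w) / (w \<bullet> w))"
      by (intro linearI) (simp_all add: inner_add_left add_divide_distrib)
    show "(v \<bullet> w) / (w \<bullet> w) = 1"
      using w_orth[OF \<open>u \<in> span K\<close>] \<open>w \<noteq> 0\<close>
      by (simp add: \<open>v = u + w\<close> inner_add_left orthogonal_def inner_commute[of u w])
    show "\<forall>b\<in>K. (b \<bullet> w) / (w \<bullet> w) = 0"
      using w_orth by (auto simp: orthogonal_def inner_commute span_base)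
  qed
qed

section \<open>Regularity of the test trajectories\<close>

lemma real_analytic_on_monomial: "real_analytic_on S (\<lambda>t. (t^n) *\<^sub>R (v::'a::real_normed_vector))"
  unfolding real_analytic_on_def
proof
  fix x :: real
  define a where "a m = (if m \<le> n then (of_nat (n choose m) * x^(n - m)) *\<^sub>R v else 0)" for m
  have "(\<lambda>m. (y - x)^m *\<^sub>R a m) sums ((y^n) *\<^sub>R v)" for y
  proof -
    have "(\<lambda>m. (y - x)^m *\<^sub>R a m) sums (\<Sum>m\<le>n. (y - x)^m *\<^sub>R a m)"
      by (rule sums_finite) (auto simp: a_def)
    also have "(\<Sum>m\<le>n. (y - x)^m *\<^sub>R a m) = (\<Sum>m\<le>n. of_nat (n choose m) * (y - x)^m * x^(n - m)) *\<^sub>R v"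
      by (simp add: a_def scaleR_sum_left algebra_simps)
    also have "(\<Sum>m\<le>n. of_nat (n choose m) * (y - x)^m * x^(n - m)) = ((y - x) + x)^n"
      by (rule binomial_ring[symmetric])
    finally show ?thesis
      by simp
  qed
  then show "\<exists>r>0. \<exists>a. \<forall>y\<in>ball x r. (\<lambda>m. (y - x)^m *\<^sub>R a m) sums ((y^n) *\<^sub>R v)"
    by (intro exI[of _ 1] conjI exI[of _ a] ballI) simp_all
qed

lemma real_analytic_on_add:
  assumes "real_analytic_on S f" "real_analytic_on S g"
  shows "real_analytic_on S (\<lambda>t. f t + g t)"
  unfolding real_analytic_on_def
proof
  fix x assume "x \<in> S"
  obtain r1 a1 where "r1 > 0" "\<forall>y\<in>ball x r1. (\<lambda>n. ((y - x)^n) *\<^sub>R a1 n) sums f y"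
    using assms(1) \<open>x \<in> S\<close> unfolding real_analytic_on_def by blast
  moreover obtain r2 a2 where "r2 > 0" "\<forall>y\<in>ball x r2. (\<lambda>n. ((y - x)^n) *\<^sub>R a2 n) sums g y"
    using assms(2) \<open>x \<in> S\<close> unfolding real_analytic_on_def by blast
  ultimately have "\<forall>y\<in>ball x (min r1 r2). (\<lambda>n. (y - x)^n *\<^sub>R (a1 n + a2 n)) sums (f y + g y)"
    by (auto simp: scaleR_right_distrib intro: sums_add)
  with \<open>r1 > 0\<close> \<open>r2 > 0\<close> show "\<exists>r>0. \<exists>a. \<forall>y\<in>ball x r. (\<lambda>n. (y - x)^n *\<^sub>R a n) sums (f y + g y)"
    by (intro exI[of _ "min r1 r2"]) auto
qed

lemma real_analytic_on_sum:
  assumes "finite A" "\<And>j. j \<in> A \<Longrightarrow> real_analytic_on S (g j)"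
  shows "real_analytic_on S (\<lambda>t. \<Sum>j\<in>A. g j t)"
  using assms
proof (induction A rule: finite_induct)
  case empty
  show ?case
    unfolding real_analytic_on_def by (intro ballI exI[of _ 1] conjI exI[of _ "\<lambda>_. 0"]) auto
next
  case (insert a A)
  then show ?case
    by (simp add: real_analytic_on_add)
qed

definition smooth_everywhere :: "('a::real_normed_vector \<Rightarrow> 'b::real_normed_vector) \<Rightarrow> bool" where
  "smooth_everywhere g \<longleftrightarrow> (\<exists>D::nat \<Rightarrow> 'a \<Rightarrow> 'a list \<Rightarrow> 'b. (\<forall>x. D 0 x [] = g x) \<and>
     (\<forall>j hs x. length hs = j \<longrightarrow> ((\<lambda>y. D j y hs) has_derivative (\<lambda>h. D (Suc j) x (h # hs))) (at x)))"

fun bipartitions :: "'a list \<Rightarrow> ('a list \<times> 'a list) list" where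
  "bipartitions [] = [([], [])]"
| "bipartitions (h # hs) =
     map (\<lambda>p. (h # fst p, snd p)) (bipartitions hs) @ map (\<lambda>p. (fst p, h # snd p)) (bipartitions hs)"

lemma has_derivative_sum_list:
  assumes "\<And>p. p \<in> set ps \<Longrightarrow> (F p has_derivative F' p) (at x)"
  shows "((\<lambda>y. sum_list (map (\<lambda>p. F p y) ps)) has_derivative (\<lambda>h. sum_list (map (\<lambda>p. F' p h) ps))) (at x)"
  using assms by (induction ps) (auto intro: has_derivative_add)

lemma smooth_everywhere_const: "smooth_everywhere (\<lambda>x. c)"
  unfolding smooth_everywhere_def
  by (rule exI[of _ "\<lambda>j x hs. if j = 0 then c else 0"]) auto

lemma smooth_everywhere_linear:
  assumes "bounded_linear L"
  shows "smooth_everywhere L"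
  unfolding smooth_everywhere_def
proof (rule exI[of _ "\<lambda>j x hs. if j = 0 then L x else if j = 1 then L (hd hs) else 0"], intro conjI allI impI)
  fix j :: nat and hs :: "'a list" and x
  show "((\<lambda>y. if j = 0 then L y else if j = 1 then L (hd hs) else 0) has_derivative
          (\<lambda>h. if Suc j = 0 then L x else if Suc j = 1 then L (hd (h # hs)) else 0)) (at x)"
    using bounded_linear_imp_has_derivative[OF assms] by (cases "j = 0"; cases "j = 1") auto
qed simp

lemma smooth_everywhere_add:
  assumes "smooth_everywhere f" "smooth_everywhere g"
  shows "smooth_everywhere (\<lambda>x. f x + g x)"
proof -
  obtain D1 where D1: "\<forall>x. D1 0 x [] = f x"
    "\<forall>j hs x. length hs = j \<longrightarrow> ((\<lambda>y. D1 j y hs) has_derivative (\<lambda>h. D1 (Suc j) x (h # hs))) (at x)"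
    using assms(1) unfolding smooth_everywhere_def by blast
  obtain D2 where D2: "\<forall>x. D2 0 x [] = g x"
    "\<forall>j hs x. length hs = j \<longrightarrow> ((\<lambda>y. D2 j y hs) has_derivative (\<lambda>h. D2 (Suc j) x (h # hs))) (at x)"
    using assms(2) unfolding smooth_everywhere_def by blast
  show ?thesis
    unfolding smooth_everywhere_def
    by (rule exI[of _ "\<lambda>j x hs. D1 j x hs + D2 j x hs"]) (use D1 D2 in \<open>auto intro: has_derivative_add\<close>)
qed

text \<open>Leibniz rule: the derivatives of a product in the directions \<open>hs\<close> are summed over all ways
  of distributing \<open>hs\<close> between the two factors.\<close>

lemma smooth_everywhere_scaleR:
  fixes f :: "'a::real_normed_vector \<Rightarrow> real" and g :: "'a \<Rightarrow> 'b::real_normed_vector"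
  assumes "smooth_everywhere f" "smooth_everywhere g"
  shows "smooth_everywhere (\<lambda>x. f x *\<^sub>R g x)"
proof -
  obtain D1 where D1: "\<forall>x. D1 0 x [] = f x"
    "\<forall>j hs x. length hs = j \<longrightarrow> ((\<lambda>y. D1 j y hs) has_derivative (\<lambda>h. D1 (Suc j) x (h # hs))) (at x)"
    using assms(1) unfolding smooth_everywhere_def by blast
  obtain D2 where D2: "\<forall>x. D2 0 x [] = g x"
    "\<forall>j hs x. length hs = j \<longrightarrow> ((\<lambda>y. D2 j y hs) has_derivative (\<lambda>h. D2 (Suc j) x (h # hs))) (at x)"
    using assms(2) unfolding smooth_everywhere_def by blast
  define F where "F p y = D1 (length (fst p)) y (fst p) *\<^sub>R D2 (length (snd p)) y (snd p)"
    for p :: "'a list \<times> 'a list" and y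
  define D where "D j x hs = sum_list (map (\<lambda>p. F p x) (bipartitions hs))"
    for j :: nat and x and hs :: "'a list"
  have "((\<lambda>y. D j y hs) has_derivative (\<lambda>h. D (Suc j) x (h # hs))) (at x)" for j hs x
  proof -
    define F' where "F' p h = D1 (length (fst p)) x (fst p) *\<^sub>R D2 (Suc (length (snd p))) x (h # snd p)
        + D1 (Suc (length (fst p))) x (h # fst p) *\<^sub>R D2 (length (snd p)) x (snd p)"
      for p :: "'a list \<times> 'a list" and h
    have "((\<lambda>y. D j y hs) has_derivative (\<lambda>h. sum_list (map (\<lambda>p. F' p h) (bipartitions hs)))) (at x)"
      unfolding D_def
      by (rule has_derivative_sum_list) (use D1(2) D2(2) in \<open>auto simp: F_def F'_def intro!: has_derivative_scaleR\<close>)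
    moreover have "(\<lambda>h. sum_list (map (\<lambda>p. F' p h) (bipartitions hs))) = (\<lambda>h. D (Suc j) x (h # hs))"
      by (rule ext) (simp add: D_def F_def F'_def o_def sum_list_addf add.commute)
    ultimately show ?thesis
      by simp
  qed
  moreover have "\<forall>x. D 0 x [] = f x *\<^sub>R g x"
    using D1(1) D2(1) by (simp add: D_def F_def)
  ultimately show ?thesis
    unfolding smooth_everywhere_def by blast
qed

lemma smooth_everywhere_sum:
  assumes "finite A" "\<And>j. j \<in> A \<Longrightarrow> smooth_everywhere (g j)"
  shows "smooth_everywhere (\<lambda>x. \<Sum>j\<in>A. g j x)"
  using assms
  by (induction A rule: finite_induct) (simp_all add: smooth_everywhere_const smooth_everywhere_add)

lemma smooth_everywhere_mult:
  fixes f g :: "'a::real_normed_vector \<Rightarrow> real"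
  assumes "smooth_everywhere f" "smooth_everywhere g"
  shows "smooth_everywhere (\<lambda>x. f x * g x)"
  using smooth_everywhere_scaleR[OF assms] by simp

lemma smooth_everywhere_power:
  fixes f :: "'a::real_normed_vector \<Rightarrow> real"
  assumes "smooth_everywhere f"
  shows "smooth_everywhere (\<lambda>x. f x ^ n)"
  by (induction n) (simp_all add: smooth_everywhere_const smooth_everywhere_mult assms)

lemma smooth_everywhere_imp_Ck_on:
  fixes g :: "'a::euclidean_space \<Rightarrow> 'b::real_normed_vector"
  assumes "smooth_everywhere g"
  shows "Ck_on m UNIV g"
proof -
  obtain D where D: "\<forall>x. D 0 x [] = g x"
    "\<forall>j hs x. length hs = j \<longrightarrow> ((\<lambda>y. D j y hs) has_derivative (\<lambda>h. D (Suc j) x (h # hs))) (at x)"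
    using assms unfolding smooth_everywhere_def by blast
  then have "continuous_on UNIV (\<lambda>y. D j y hs)" if "length hs = j" for j hs
    using that by (auto intro!: continuous_at_imp_continuous_on has_derivative_continuous)
  with D show ?thesis
    unfolding Ck_on_def by blast
qed

lemma Ck_on_test_trajectory:
  fixes pp :: "nat \<Rightarrow> 'a::euclidean_space"
  shows "Ck_on m UNIV (\<lambda>(t, z0). test_trajectory pp k t z0)"
proof -
  have fst: "smooth_everywhere (\<lambda>x::real \<times> real \<times> 'a. fst x)"
    and fst_snd: "smooth_everywhere (\<lambda>x::real \<times> real \<times> 'a. fst (snd x))"
    and snd_snd: "smooth_everywhere (\<lambda>x::real \<times> real \<times> 'a. snd (snd x))"
    by (intro smooth_everywhere_linear bounded_linear_intros)+
  have "smooth_everywhere (\<lambda>x::real \<times> real \<times> 'a. (\<Sum>j=1..k-1. (fst (snd x) ^ j * fst x ^ j) *\<^sub>R pp j)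
      + (fst x ^ k) *\<^sub>R snd (snd x))"
    by (intro smooth_everywhere_add smooth_everywhere_sum smooth_everywhere_scaleR smooth_everywhere_mult
        smooth_everywhere_power smooth_everywhere_const fst fst_snd snd_snd finite_atLeastAtMost)
  moreover have "(\<lambda>(t, z0). test_trajectory pp k t z0) = (\<lambda>x::real \<times> real \<times> 'a.
      (\<Sum>j=1..k-1. (fst (snd x) ^ j * fst x ^ j) *\<^sub>R pp j) + (fst x ^ k) *\<^sub>R snd (snd x))"
    by (auto simp: test_trajectory_def fun_eq_iff)
  ultimately show ?thesis
    by (simp add: smooth_everywhere_imp_Ck_on)
qed

section \<open>The test trajectories form an indicative family\<close>

lemma exists_unit_rescaling:
  fixes s w \<delta> :: real
  assumes "0 < \<delta>" "0 < k" "0 \<le> w" "s \<noteq> 0 \<or> w \<noteq> 0"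
    and small: "(s / \<delta>)^2 + (w / \<delta>^k)^2 < 1"
  obtains \<tau> where "0 < \<tau>" "\<tau> \<le> \<delta>" "(s / \<tau>)^2 + (w / \<tau>^k)^2 = 1"
proof -
  define h where "h \<tau> = (s / \<tau>)^2 + (w / \<tau>^k)^2" for \<tau>
  define t0 where "t0 = min \<delta> (min 1 (max \<bar>s\<bar> w))"
  have t0: "0 < t0" "t0 \<le> \<delta>" "t0 \<le> 1"
    using assms by (auto simp: t0_def)
  have "1 \<le> h t0"
  proof (cases "w \<le> \<bar>s\<bar>")
    case True
    then have "t0 \<le> \<bar>s\<bar>"
      by (simp add: t0_def)
    then have "1 \<le> (s / t0)^2"
      using t0 power_mono[of t0 "\<bar>s\<bar>" 2] by (simp add: power_divide le_divide_eq)
    then show ?thesis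
      unfolding h_def by (smt (verit) zero_le_power2)
  next
    case False
    then have "t0^k \<le> w"
      using t0 power_decreasing[of 1 k t0] \<open>0 < k\<close> by (simp add: t0_def)
    moreover have "0 < t0^k"
      using t0 by simp
    ultimately have "1 \<le> (w / t0^k)^2"
      by (simp add: one_le_power)
    then show ?thesis
      unfolding h_def by (smt (verit) zero_le_power2)
  qed
  moreover have "continuous_on {t0..\<delta>} h"
    unfolding h_def using t0 by (intro continuous_intros) auto
  ultimately obtain \<tau> where "t0 \<le> \<tau>" "\<tau> \<le> \<delta>" "h \<tau> = 1"
    using IVT2'[of h \<delta> 1 t0] small t0 by (auto simp: h_def)
  with t0 show ?thesis
    using that[of \<tau>] by (simp add: h_def)
qed

lemma remainder_in_complement:
  fixes pp :: "nat \<Rightarrow> 'a::real_vector" and g :: "'a \<Rightarrow> real"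
  assumes "linear g" "g (pp 1) = 1" "\<forall>b\<in>Kbar. g b = 0" "subspace Kbar"
    and "\<forall>j\<in>{2..k-1}. pp j \<in> Kbar" and "2 \<le> k"
    and "x = c *\<^sub>R pp 1 + b" "b \<in> Kbar"
  shows "x - (\<Sum>j=1..k-1. (g x)^j *\<^sub>R pp j) \<in> Kbar"
proof -
  have "g x = c"
    using assms by (simp add: linear_add linear_scale)
  then have "x - (\<Sum>j=1..k-1. (g x)^j *\<^sub>R pp j) = b - (\<Sum>j=2..k-1. c^j *\<^sub>R pp j)"
    unfolding sum_split_first[OF \<open>2 \<le> k\<close>] using assms by simp
  also have "\<dots> \<in> Kbar"
    using assms by (intro subspace_diff subspace_sum subspace_scale) auto
  finally show ?thesis .
qed

lemma test_trajectory_reaches: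
  fixes pp :: "nat \<Rightarrow> 'a::real_normed_vector" and g :: "'a \<Rightarrow> real"
  assumes "linear g" "g (pp 1) = 1" "\<forall>b\<in>Kbar. g b = 0"
    and "subspace Kbar" "\<forall>j\<in>{2..k-1}. pp j \<in> Kbar" "2 \<le> k"
    and "x = c *\<^sub>R pp 1 + b" "b \<in> Kbar" and "0 < \<delta>"
    and small: "(g x / \<delta>)^2 + (norm (x - (\<Sum>j=1..k-1. (g x)^j *\<^sub>R pp j)) / \<delta>^k)^2 < 1"
  shows "\<exists>z0\<in>{(y, q). q \<in> Kbar \<and> norm (y, q) = 1}. \<exists>t\<in>{0..\<delta>}. x = test_trajectory pp k t z0"
proof (cases "x = 0")
  case True
  then show ?thesis
    using test_trajectory_at_0[of k pp "(1, 0)"] \<open>2 \<le> k\<close> \<open>0 < \<delta>\<close> subspace_0[OF \<open>subspace Kbar\<close>]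
    by (intro bexI[of _ "(1, 0)"] bexI[of _ 0]) auto
next
  case False
  define w where "w = x - (\<Sum>j=1..k-1. (g x)^j *\<^sub>R pp j)"
  have x_eq: "x = (\<Sum>j=1..k-1. (g x)^j *\<^sub>R pp j) + w"
    by (simp add: w_def)
  have "w \<in> Kbar"
    unfolding w_def using assms by (intro remainder_in_complement) auto
  have "g x \<noteq> 0 \<or> norm w \<noteq> 0"
    using False x_eq by (auto simp: power_0_left)
  with small obtain \<tau> where "0 < \<tau>" "\<tau> \<le> \<delta>" and unit: "(g x / \<tau>)^2 + (norm w / \<tau>^k)^2 = 1"
    using exists_unit_rescaling[of \<delta> k "norm w" "g x"] \<open>0 < \<delta>\<close> \<open>2 \<le> k\<close> by (auto simp: w_def)
  have "(g x / \<tau>, (1 / \<tau>^k) *\<^sub>R w) \<in> {(y, q). q \<in> Kbar \<and> norm (y, q) = 1}"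
    using unit \<open>w \<in> Kbar\<close> \<open>0 < \<tau>\<close> subspace_scale[OF \<open>subspace Kbar\<close>]
    by (simp add: norm_Pair power_divide)
  moreover have "x = test_trajectory pp k \<tau> (g x / \<tau>, (1 / \<tau>^k) *\<^sub>R w)"
    using \<open>0 < \<tau>\<close> x_eq by (simp add: test_trajectory_rescale)
  ultimately show ?thesis
    using \<open>0 < \<tau>\<close> \<open>\<tau> \<le> \<delta>\<close> by fastforce
qed

lemma test_trajectory_covers_neighbourhood:
  fixes pp :: "nat \<Rightarrow> 'a::euclidean_space" and g :: "'a \<Rightarrow> real"
  assumes "linear g" "g (pp 1) = 1" "\<forall>b\<in>Kbar. g b = 0"
    and "subspace Kbar" "\<forall>j\<in>{2..k-1}. pp j \<in> Kbar" "2 \<le> k"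
    and V: "V \<subseteq> {a + b | a b. a \<in> span {pp 1} \<and> b \<in> Kbar}" and "0 < \<delta>"
  shows "\<exists>r>0. \<forall>x\<in>V. norm x < r \<longrightarrow>
           (\<exists>z0\<in>{(y, q). q \<in> Kbar \<and> norm (y, q) = 1}. \<exists>t\<in>{0..\<delta>}. x = test_trajectory pp k t z0)"
proof -
  define H where "H x = (g x / \<delta>)^2 + (norm (x - (\<Sum>j=1..k-1. (g x)^j *\<^sub>R pp j)) / \<delta>^k)^2" for x
  have "isCont g x" for x
    using linear_continuous_at[of g] \<open>linear g\<close> by (simp add: linear_conv_bounded_linear)
  then have "isCont H 0"
    unfolding H_def using \<open>0 < \<delta>\<close> by (intro continuous_intros) auto
  then obtain r where "r > 0" and r: "\<forall>x. dist x 0 < r \<longrightarrow> dist (H x) (H 0) < 1"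
    unfolding continuous_at_eps_delta by (meson zero_less_one)
  have "H 0 = 0"
    using linear_0[OF \<open>linear g\<close>] by (simp add: H_def power_0_left)
  have "\<exists>z0\<in>{(y, q). q \<in> Kbar \<and> norm (y, q) = 1}. \<exists>t\<in>{0..\<delta>}. x = test_trajectory pp k t z0"
    if "x \<in> V" "norm x < r" for x
  proof -
    obtain c b where "x = c *\<^sub>R pp 1 + b" "b \<in> Kbar"
      using V \<open>x \<in> V\<close> by (auto simp: span_singleton)
    moreover have "H x < 1"
      using r that \<open>H 0 = 0\<close> by (auto simp: dist_real_def)
    ultimately show ?thesis
      using assms by (intro test_trajectory_reaches) (auto simp: H_def)
  qed
  with \<open>r > 0\<close> show ?thesis
    by blast
qed

lemma compact_unit_sphere_Times_subspace:
  assumes "subspace K"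
  shows "compact {(y::real, q::'a::euclidean_space). q \<in> K \<and> norm (y, q) = 1}"
proof -
  have "{(y::real, q). q \<in> K \<and> norm (y, q) = 1} = sphere 0 1 \<inter> (UNIV \<times> K)"
    by auto
  moreover have "compact (sphere (0::real \<times> 'a) 1 \<inter> (UNIV \<times> K))"
    by (intro compact_Int_closed compact_sphere closed_Times closed_UNIV closed_subspace[OF assms])
  ultimately show ?thesis
    by simp
qed

lemma test_family_test_trajectory:
  fixes pp :: "nat \<Rightarrow> 'a::real_normed_vector" and g :: "'a \<Rightarrow> real"
  assumes g: "linear g" "g (pp 1) = 1" "\<forall>b\<in>Kbar. g b = 0"
    and "subspace V" "Kbar \<subseteq> V" "pp 1 \<in> V" and pp_Kbar: "\<forall>j\<in>{2..k-1}. pp j \<in> Kbar" and "2 \<le> k"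
    and "\<epsilon> > 0"
  shows "test_family V \<epsilon> {(y, q). q \<in> Kbar \<and> norm (y, q) = 1} (test_trajectory pp k)"
  unfolding test_family_def
proof (intro conjI ballI \<open>\<epsilon> > 0\<close>)
  fix z0 :: "real \<times> 'a" assume "z0 \<in> {(y, q). q \<in> Kbar \<and> norm (y, q) = 1}"
  then obtain y q where z0: "z0 = (y, q)" "q \<in> Kbar" "norm (y, q) = 1"
    by blast
  have traj: "test_trajectory pp k t z0 = (\<Sum>j\<in>{1..k-1}. t^j *\<^sub>R (y^j *\<^sub>R pp j)) + (t^k) *\<^sub>R q" for t
    by (simp add: test_trajectory_def z0 mult.commute)
  show "real_analytic_on {0..\<epsilon>} (\<lambda>t. test_trajectory pp k t z0)"
    unfolding traj by (intro real_analytic_on_add real_analytic_on_sum real_analytic_on_monomial finite_atLeastAtMost)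
  show "test_trajectory pp k 0 z0 = 0"
    using \<open>2 \<le> k\<close> by (simp add: test_trajectory_at_0)
  have "pp j \<in> V" if "j \<in> {1..k-1}" for j
    using that pp_Kbar \<open>pp 1 \<in> V\<close> \<open>Kbar \<subseteq> V\<close> by (cases "j = 1") auto
  then show "test_trajectory pp k t z0 \<in> V" for t
    unfolding traj using \<open>q \<in> Kbar\<close> \<open>Kbar \<subseteq> V\<close>
    by (intro subspace_add[OF \<open>subspace V\<close>] subspace_sum[OF \<open>subspace V\<close>] subspace_scale[OF \<open>subspace V\<close>]) auto
  have "g (test_trajectory pp k \<epsilon> z0) = y * \<epsilon>"
  proof -
    have "g (test_trajectory pp k \<epsilon> z0) = (\<Sum>j=1..k-1. (y^j * \<epsilon>^j) * g (pp j))"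
      using g z0 by (simp add: test_trajectory_def linear_add linear_sum linear_scale o_def)
    also have "\<dots> = y * \<epsilon>"
      unfolding sum_split_first[OF \<open>2 \<le> k\<close>] using g pp_Kbar by simp
    finally show ?thesis .
  qed
  moreover have "test_trajectory pp k \<epsilon> z0 = (\<epsilon>^k) *\<^sub>R q" if "y = 0"
    using that by (simp add: test_trajectory_def z0 power_0_left)
  ultimately have "test_trajectory pp k \<epsilon> z0 \<noteq> 0"
    using z0(3) \<open>\<epsilon> > 0\<close> linear_0[OF g(1)] by (cases "y = 0") auto
  then show "\<exists>t\<in>{0..\<epsilon>}. test_trajectory pp k t z0 \<noteq> test_trajectory pp k 0 z0"
    using \<open>\<epsilon> > 0\<close> \<open>2 \<le> k\<close> by (intro bexI[of _ \<epsilon>]) (auto simp: test_trajectory_at_0)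
qed

lemma indicative_test_trajectory:
  fixes pp :: "nat \<Rightarrow> 'a::euclidean_space" and f :: "'a \<Rightarrow> real"
  assumes "subspace V" "subspace Kbar" "Kbar \<subseteq> V" "pp 1 \<in> V" "pp 1 \<notin> Kbar"
    and "\<forall>j\<in>{2..k-1}. pp j \<in> Kbar" "2 \<le> k"
    and "V \<subseteq> {a + b | a b. a \<in> span {pp 1} \<and> b \<in> Kbar}"
    and "\<forall>z0\<in>{(y, q). q \<in> Kbar \<and> norm (y, q) = 1}. \<forall>i<2 * k. (vderiv ^^ i) (\<lambda>t. f (test_trajectory pp k t z0)) 0 = 0"
  shows "indicative V 1 {(y, q). q \<in> Kbar \<and> norm (y, q) = 1} (test_trajectory pp k) f k"
proof -
  obtain g :: "'a \<Rightarrow> real" where g: "linear g" "g (pp 1) = 1" "\<forall>b\<in>Kbar. g b = 0"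
    using linear_functional_vanishing_on_subspace[OF assms(2,5)] by blast
  show ?thesis
    unfolding indicative_def
  proof (intro conjI exI[of _ UNIV] allI impI)
    show "test_family V 1 {(y, q). q \<in> Kbar \<and> norm (y, q) = 1} (test_trajectory pp k)"
      using test_family_test_trajectory[OF g assms(1,3,4,6,7)] by simp
    show "Ck_on (2 * k + 1) UNIV (\<lambda>(t, z0). test_trajectory pp k t z0)"
      by (rule Ck_on_test_trajectory)
    show "\<exists>r>0. \<forall>x\<in>V. norm x < r \<longrightarrow>
        (\<exists>z0\<in>{(y, q). q \<in> Kbar \<and> norm (y, q) = 1}. \<exists>t\<in>{0..\<delta>}. x = test_trajectory pp k t z0)"
      if "0 < \<delta> \<and> \<delta> \<le> 1" for \<delta>
      using test_trajectory_covers_neighbourhood[OF g assms(2,6,7,8)] that by blast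
  qed (use compact_unit_sphere_Times_subspace[OF assms(2)] assms(9) in auto)
qed

theorem lemma7p5:
  fixes p :: "real^'d^'n" and vert :: "nat \<Rightarrow> 'n" and ax :: "nat \<Rightarrow> 'd"
    and l k :: nat and Edges :: "('n \<times> 'n) set" and Kbar :: "(real^'d^'n) set"
    and Ee :: "'n \<times> 'n \<Rightarrow> real \<Rightarrow> real" and pp :: "nat \<Rightarrow> real^'d^'n"
  assumes "bij_betw vert {1..CARD('n)} UNIV" and "bij_betw ax {1..CARD('d)} UNIV"
    and "simple_graph_edges Edges"
    and "is_pinned vert ax l p"
    and "dim (Kspace vert ax l Edges p) = 1"
    and "is_complement (pinned_space vert ax l) (Kspace vert ax l Edges p) Kbar"
    and "stiff_bar_energy Edges p Ee"
    and "k \<ge> 2"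
    and "is_flex vert ax l Edges p (\<lambda>t. p + (\<Sum>j=1..k-1. (t^j) *\<^sub>R pp j)) 1 (k-1)"
    and "norm (pp 1) = 1"
    and "\<forall>j\<in>{2..k-1}. pp j \<in> Kbar"
  shows "\<exists>\<epsilon>>0. indicative (pinned_space vert ax l) \<epsilon>
            {(y, q). q \<in> Kbar \<and> norm (y, q) = 1}
            (\<lambda>t (y, q). (\<Sum>j=1..k-1. (y^j * t^j) *\<^sub>R pp j) + (t^k) *\<^sub>R q)
            (\<lambda>\<delta>. energy Edges Ee (p + \<delta>) - energy Edges Ee p)
            k"
proof -
  let ?V = "pinned_space vert ax l" and ?K = "Kspace vert ax l Edges p"
  let ?S = "{(y, q). q \<in> Kbar \<and> norm (y, q) = 1}"
  have Kbar: "subspace Kbar" "Kbar \<subseteq> ?V" "?K \<inter> Kbar = {0}" "?V \<subseteq> {a + b | a b. a \<in> ?K \<and> b \<in> Kbar}"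
    using assms(6) unfolding is_complement_def by auto
  have pp_K: "pp 1 \<in> ?K"
    using flex_velocity_in_Kspace[OF assms(4,9,8)] assms(11) Kbar(2) by blast
  have "pp 1 \<noteq> 0"
    using assms(10) by auto
  have K_span: "?K = span {pp 1}"
    using subspace_Kspace assms(5) pp_K \<open>pp 1 \<noteq> 0\<close> by (rule subspace_dim_1_eq_span)
  have "pp 1 \<notin> Kbar"
    using pp_K Kbar(3) \<open>pp 1 \<noteq> 0\<close> by blast
  have "pp 1 \<in> ?V"
    using pp_K by (simp add: Kspace_def)
  have "\<forall>e\<in>Edges. k_vanishing (k - 1) (\<lambda>t. meas (p + (\<Sum>j=1..k-1. t^j *\<^sub>R pp j)) e)"
    using assms(9) unfolding is_flex_def by blast
  then have energy: "\<forall>z0\<in>?S. \<forall>i<2 * k.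
      (vderiv ^^ i) (\<lambda>t. energy Edges Ee (p + test_trajectory pp k t z0) - energy Edges Ee p) 0 = 0"
    using vderiv_energy_test_trajectory_eq_0[OF assms(7)] assms(8) by auto
  have "?V \<subseteq> {a + b | a b. a \<in> span {pp 1} \<and> b \<in> Kbar}"
    using Kbar(4) K_span by simp
  from indicative_test_trajectory[OF subspace_pinned_space Kbar(1,2) \<open>pp 1 \<in> ?V\<close> \<open>pp 1 \<notin> Kbar\<close>
      assms(11,8) this energy]
  have "indicative ?V 1 ?S (test_trajectory pp k) (\<lambda>\<delta>. energy Edges Ee (p + \<delta>) - energy Edges Ee p) k" .
  moreover have "test_trajectory pp k = (\<lambda>t (y, q). (\<Sum>j=1..k-1. (y^j * t^j) *\<^sub>R pp j) + (t^k) *\<^sub>R q)"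
    by (auto simp: fun_eq_iff test_trajectory_def)
  ultimately show ?thesis
    by (intro exI[of _ 1]) simp
qed

end
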